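(* Let $\alpha,q\in(-1,1)$, $x\in H$ and $n\ge1$. Then on $H^{\otimes n}$, $$b_{\alpha,q}(x)=r(x)\,R^{(n)}_{\alpha,q},$$ where $R^{(n)}_{\alpha,q}=1+\sum_{k=1}^{n-1}q^{k}\pi_{n-1}\cdots\pi_{n-k}+\alpha q^{n-1}\pi_{n-1}\pi_{n-2}\cdots\pi_1\pi_0\big(1+\sum_{k=1}^{n-1}q^{k}\pi_1\cdots\pi_k\big)$.
   Context: Let $H_\mathbb{R}$ be a real separable Hilbert space and $H$ its complexification, with inner product $\langle\cdot,\cdot\rangle$ linear in the second and antilinear in the first argument. Fix a self-adjoint involution $x\mapsto\bar x$ on $H$ (linear, $\bar{\bar x}=x$, $\langle\bar x,y\rangle=\langle x,\bar y\rangle$). Let $\Sigma(n)$ be the group of bijections $\sigma$ of $\{\pm1,\dots,\pm n\}$ with $\sigma(-k)=-\sigma(k)$, generated by $\pi_0=(1,-1)$ and $\pi_i=(i,i+1)$, $1\le i\le n-1$; for $\sigma$ written as a reduced (minimal length) word, $l_1(\sigma)$ is the number of occurrences of $\pi_0$ and $l_2(\sigma)$ the number of occurrences of $\pi_i$, $i\ge1$. $\Sigma(n)$ acts on $H^{\otimes n}$ by $\pi_i$ swapping the $i$-th and $(i+1)$-th tensor factors and $\pi_0(x_1\otimes\cdots\otimes x_n)=\overline{x_1}\otimes x_2\otimes\cdots\otimes x_n$. Set $P^{(n)}_{\alpha,q}=\sum_{\sigma\in\Sigma(n)}\alpha^{l_1(\sigma)}q^{l_2(\sigma)}\sigma$ ($n\ge1$,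 convention $0^0=1$), $P^{(0)}_{\alpha,q}=\mathrm{id}$. Let $\mathcal F=\bigoplus_{n\ge0}H^{\otimes n}$ be the algebraic full Fock space (finite sums, no completion), $H^{\otimes0}=\mathbb{C}\Omega$, with $\langle x_1\otimes\cdots\otimes x_m,y_1\otimes\cdots\otimes y_n\rangle_{0,0}=\delta_{m,n}\prod_i\langle x_i,y_i\rangle$, and $\langle f,g\rangle_{\alpha,q}=\langle f,P_{\alpha,q}g\rangle_{0,0}$ where $P_{\alpha,q}=\bigoplus_n P^{(n)}_{\alpha,q}$; for $\alpha,q\in(-1,1)$ this is an inner product. The right creation operator is $r^*(x)(x_1\otimes\cdots\otimes x_n)=x_1\otimes\cdots\otimes x_n\otimes x$, $r^*(x)\Omega=x$, and the free right annihilation operator is $r(x)(x_1\otimes\cdots\otimes x_n)=\langle x,x_n\rangle x_1\otimes\cdots\otimes x_{n-1}$ ($n\ge2$), $r(x)x_1=\langle x,x_1\rangle\Omega$, $r(x)\Omega=0$. The $(\alpha,q)$-creation operator is $b^*_{\alpha,q}(x):=r^*(x)$ and the $(\alpha,q)$-annihilation operator $b_{\alpha,q}(x)$ is its adjoint with respect to $\langle\cdot,\cdot\rangle_{\alpha,q}$. *)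

theory Defs
  imports "HOL-Analysis.Analysis"
begin

text \<open>An element (u,v) of 'r \<times> 'r stands for u + i v. Addition is componentwise.\<close>

definition cscale :: "complex \<Rightarrow> ('r::real_vector \<times> 'r) \<Rightarrow> 'r \<times> 'r" where
  "cscale z h = (Re z *\<^sub>R fst h - Im z *\<^sub>R snd h, Re z *\<^sub>R snd h + Im z *\<^sub>R fst h)"

text \<open>Inner product on H, antilinear in the first and linear in the second argument.\<close>
definition hip :: "('r::real_inner \<times> 'r) \<Rightarrow> ('r \<times> 'r) \<Rightarrow> complex" where
  "hip h k = Complex (fst h \<bullet> fst k + snd h \<bullet> snd k) (fst h \<bullet> snd k - snd h \<bullet> fst k)"

definition sset :: "nat \<Rightarrow> int set" where
  "sset n = {k. 1 \<le> \<bar>k\<bar> \<and> \<bar>k\<bar> \<le> int n}"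

definition signed_perms :: "nat \<Rightarrow> (int \<Rightarrow> int) set" where
  "signed_perms n = {\<sigma>. bij_betw \<sigma> (sset n) (sset n) \<and> (\<forall>k\<in>sset n. \<sigma> (-k) = - \<sigma> k)
                          \<and> (\<forall>k. k \<notin> sset n \<longrightarrow> \<sigma> k = k)}"

text \<open>Generators: 0 stands for \<pi>_0 = (1,-1), i \<ge> 1 for \<pi>_i = (i,i+1) (together with (-i,-(i+1))).\<close>
definition gen :: "nat \<Rightarrow> int \<Rightarrow> int" where
  "gen i = (if i = 0 then Fun.swap 1 (-1) id
            else Fun.swap (int i) (int i + 1) id \<circ> Fun.swap (- int i) (- int i - 1) id)"

text \<open>A word [a1,...,ak] denotes the product \<pi>_a1 \<pi>_a2 ... \<pi>_ak.\<close>
definition word_eval :: "nat list \<Rightarrow> int \<Rightarrow> int" where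
  "word_eval w = foldr (\<lambda>i f. gen i \<circ> f) w id"

definition reduced_word :: "nat \<Rightarrow> nat list \<Rightarrow> (int \<Rightarrow> int) \<Rightarrow> bool" where
  "reduced_word n w \<sigma> \<longleftrightarrow> set w \<subseteq> {0..<n} \<and> word_eval w = \<sigma> \<and>
     (\<forall>w'. set w' \<subseteq> {0..<n} \<and> word_eval w' = \<sigma> \<longrightarrow> length w \<le> length w')"

definition rword :: "nat \<Rightarrow> (int \<Rightarrow> int) \<Rightarrow> nat list" where
  "rword n \<sigma> = (SOME w. reduced_word n w \<sigma>)"

definition l1 :: "nat \<Rightarrow> (int \<Rightarrow> int) \<Rightarrow> nat" where
  "l1 n \<sigma> = count_list (rword n \<sigma>) 0"

definition l2 :: "nat \<Rightarrow> (int \<Rightarrow> int) \<Rightarrow> nat" where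
  "l2 n \<sigma> = length (filter (\<lambda>i. i \<noteq> 0) (rword n \<sigma>))"

section \<open>Action on elementary tensors (represented as lists x1 \<otimes> ... \<otimes> xn)\<close>

definition act_gen :: "('h \<Rightarrow> 'h) \<Rightarrow> nat \<Rightarrow> 'h list \<Rightarrow> 'h list" where
  "act_gen bar i xs = (if i = 0 then (case xs of [] \<Rightarrow> [] | y # ys \<Rightarrow> bar y # ys)
                       else xs[i - 1 := xs ! i, i := xs ! (i - 1)])"

definition act_word :: "('h \<Rightarrow> 'h) \<Rightarrow> nat list \<Rightarrow> 'h list \<Rightarrow> 'h list" where
  "act_word bar w xs = foldr (act_gen bar) w xs"

definition sigma_act :: "('h \<Rightarrow> 'h) \<Rightarrow> nat \<Rightarrow> (int \<Rightarrow> int) \<Rightarrow> 'h list \<Rightarrow> 'h list" where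
  "sigma_act bar n \<sigma> xs = act_word bar (rword n \<sigma>) xs"

section \<open>Algebraic full Fock space: finite formal linear combinations of elementary tensors\<close>

type_synonym 'h fock = "(complex \<times> 'h list) list"

definition ip0 :: "('h \<Rightarrow> 'h \<Rightarrow> complex) \<Rightarrow> 'h list \<Rightarrow> 'h list \<Rightarrow> complex" where
  "ip0 ip xs ys = (if length xs = length ys then (\<Prod>i<length xs. ip (xs ! i) (ys ! i)) else 0)"

text \<open>< xs, P_{\<alpha>,q} ys >_{0,0} on elementary tensors.\<close>
definition ipaq :: "('h \<Rightarrow> 'h \<Rightarrow> complex) \<Rightarrow> ('h \<Rightarrow> 'h) \<Rightarrow> real \<Rightarrow> real \<Rightarrow> 'h list \<Rightarrow> 'h list \<Rightarrow> complex" where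
  "ipaq ip bar \<alpha> q xs ys =
     (\<Sum>\<sigma>\<in>signed_perms (length ys).
        complex_of_real \<alpha> ^ l1 (length ys) \<sigma> * complex_of_real q ^ l2 (length ys) \<sigma>
        * ip0 ip xs (sigma_act bar (length ys) \<sigma> ys))"

definition fip :: "('h list \<Rightarrow> 'h list \<Rightarrow> complex) \<Rightarrow> 'h fock \<Rightarrow> 'h fock \<Rightarrow> complex" where
  "fip E F G = (\<Sum>(c, xs)\<leftarrow>F. \<Sum>(d, ys)\<leftarrow>G. cnj c * d * E xs ys)"

definition fop :: "('h list \<Rightarrow> 'h fock) \<Rightarrow> 'h fock \<Rightarrow> 'h fock" where
  "fop T F = concat (map (\<lambda>(c, xs). map (\<lambda>(d, ys). (c * d, ys)) (T xs)) F)"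

definition rann :: "('h \<Rightarrow> 'h \<Rightarrow> complex) \<Rightarrow> 'h \<Rightarrow> 'h list \<Rightarrow> 'h fock" where
  "rann ip x xs = (if xs = [] then [] else [(ip x (last xs), butlast xs)])"

text \<open>Right creation operator r*(x) = b*_{\<alpha>,q}(x).\<close>
definition rcre :: "'h \<Rightarrow> 'h list \<Rightarrow> 'h fock" where
  "rcre x xs = [(1, xs @ [x])]"

definition Rop :: "('h \<Rightarrow> 'h) \<Rightarrow> real \<Rightarrow> real \<Rightarrow> nat \<Rightarrow> 'h list \<Rightarrow> 'h fock" where
  "Rop bar \<alpha> q n xs =
     [(1, xs)]
     @ map (\<lambda>k. (complex_of_real q ^ k, act_word bar (rev [n - k..<n]) xs)) [1..<n]
     @ [(complex_of_real \<alpha> * complex_of_real q ^ (n - 1), act_word bar (rev [0..<n]) xs)]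
     @ map (\<lambda>k. (complex_of_real \<alpha> * complex_of_real q ^ (n - 1) * complex_of_real q ^ k,
                  act_word bar (rev [0..<n] @ [1..<k + 1]) xs)) [1..<n]"

end

theory Submission
  imports Defs
begin

text \<open>Every \<open>\<sigma> \<in> \<Sigma>(n + 1)\<close> factors uniquely as \<open>\<sigma> = \<rho>\<^sub>m \<tau>\<close> with \<open>m = \<sigma>(n + 1)\<close>,
  \<open>\<tau> \<in> \<Sigma>(n)\<close> and \<open>\<rho>\<^sub>m\<close> an explicit shuffle. Computing \<open>l\<^sub>1\<close> and \<open>l\<^sub>2\<close> by the type B
  length formula (negative values, resp. inversions and negative-sum pairs) shows that the
  lengths add, \<open>l\<^sub>1(\<sigma>) = l\<^sub>1(\<tau>) + [m < 0]\<close> and \<open>l\<^sub>2(\<sigma>) = l\<^sub>2(\<tau>) + c(m)\<close>, hence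
  \<open>P\<^sup>(\<^sup>n\<^sup>+\<^sup>1\<^sup>) = (\<Sum>\<^sub>m \<alpha>\<^bsup>[m < 0]\<^esup> q\<^bsup>c(m)\<^esup> \<rho>\<^sub>m) (P\<^sup>(\<^sup>n\<^sup>) \<otimes> 1)\<close>. The terms of \<open>R\<^sup>(\<^sup>n\<^sup>+\<^sup>1\<^sup>)\<close> are
  exactly the adjoints \<open>\<alpha>\<^bsup>[m < 0]\<^esup> q\<^bsup>c(m)\<^esup> \<rho>\<^sub>m\<inverse>\<close> with respect to the free inner product, so
  \<open>\<langle>r(x) R\<^sup>(\<^sup>n\<^sup>+\<^sup>1\<^sup>) \<xi>, \<eta>\<rangle>\<^sub>\<alpha>\<^sub>,\<^sub>q = \<langle>\<xi>, \<eta> \<otimes> x\<rangle>\<^sub>\<alpha>\<^sub>,\<^sub>q\<close> on elementary tensors.\<close>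

lemma gen_apply:
  "gen i k = (if i = 0 then (if k = 1 then -1 else if k = -1 then 1 else k)
     else if k = int i then int i + 1 else if k = int i + 1 then int i
     else if k = - int i then - int i - 1 else if k = - int i - 1 then - int i else k)"
  unfolding gen_def by (auto simp: transpose_def)

lemma gen_uminus: "gen i (- k) = - gen i k"
  by (simp add: gen_apply)

lemma gen_gen [simp]: "gen i (gen i k) = k"
  by (simp add: gen_apply)

lemma word_eval_Nil [simp]: "word_eval [] = id"
  by (simp add: word_eval_def)

lemma word_eval_Cons [simp]: "word_eval (a # w) = gen a \<circ> word_eval w"
  by (simp add: word_eval_def)

lemma word_eval_append: "word_eval (v @ w) = word_eval v \<circ> word_eval w"
  by (induction v) auto

lemma word_eval_snoc: "word_eval (w @ [a]) = word_eval w \<circ> gen a"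
  by (simp add: word_eval_append)

lemma word_eval_uminus: "word_eval w (- k) = - word_eval w k"
  by (induction w arbitrary: k) (auto simp: gen_uminus)

lemma word_eval_rev_cancel [simp]: "word_eval (rev w) (word_eval w k) = k"
  by (induction w arbitrary: k) (auto simp: word_eval_append)

lemma word_eval_cancel_rev [simp]: "word_eval w (word_eval (rev w) k) = k"
  using word_eval_rev_cancel[of "rev w"] by simp

section \<open>Signed permutations\<close>

lemma mem_sset_iff: "k \<in> sset n \<longleftrightarrow> 1 \<le> \<bar>k\<bar> \<and> \<bar>k\<bar> \<le> int n"
  by (simp add: sset_def)

lemma finite_sset [simp]: "finite (sset n)"
  by (rule finite_subset[of _ "{- int n..int n}"]) (auto simp: mem_sset_iff)

lemma signed_perm_in_sset: "\<sigma> \<in> signed_perms n \<Longrightarrow> k \<in> sset n \<Longrightarrow> \<sigma> k \<in> sset n"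
  unfolding signed_perms_def bij_betw_def by auto

lemma signed_perm_fixed: "\<sigma> \<in> signed_perms n \<Longrightarrow> k \<notin> sset n \<Longrightarrow> \<sigma> k = k"
  unfolding signed_perms_def by auto

lemma signed_perm_uminus:
  assumes "\<sigma> \<in> signed_perms n"
  shows "\<sigma> (- k) = - \<sigma> k"
proof (cases "k \<in> sset n")
  case True
  then show ?thesis using assms unfolding signed_perms_def by auto
next
  case False
  then have "- k \<notin> sset n" by (auto simp: mem_sset_iff)
  then show ?thesis using False signed_perm_fixed[OF assms] by simp
qed

lemma signed_perm_inj:
  assumes s: "\<sigma> \<in> signed_perms n"
  shows "inj \<sigma>"
proof (rule injI)
  fix a b assume e: "\<sigma> a = \<sigma> b"
  have "inj_on \<sigma> (sset n)" using s unfolding signed_perms_def bij_betw_def by auto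
  then show "a = b"
    using e signed_perm_fixed[OF s] signed_perm_in_sset[OF s] by (metis inj_onD)
qed

lemma id_in_signed_perms: "id \<in> signed_perms n"
  by (simp add: signed_perms_def)

lemma gen_in_signed_perms:
  assumes "i < n"
  shows "gen i \<in> signed_perms n"
proof -
  have into: "gen i k \<in> sset n" if "k \<in> sset n" for k
    using assms that by (auto simp: mem_sset_iff gen_apply)
  have "bij_betw (gen i) (sset n) (sset n)"
    by (rule bij_betw_byWitness[where f' = "gen i"]) (use into in auto)
  moreover have "\<forall>k. k \<notin> sset n \<longrightarrow> gen i k = k"
    using assms by (auto simp: mem_sset_iff gen_apply)
  ultimately show ?thesis by (simp add: signed_perms_def gen_uminus)
qed

lemma signed_perms_comp:
  assumes s: "\<sigma> \<in> signed_perms n" and t: "\<tau> \<in> signed_perms n"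
  shows "\<sigma> \<circ> \<tau> \<in> signed_perms n"
  using bij_betw_trans[of \<tau> "sset n" "sset n" \<sigma>] s t signed_perm_uminus[OF s] signed_perm_uminus[OF t]
  by (auto simp: signed_perms_def)

lemma word_eval_in_signed_perms: "set w \<subseteq> {0..<n} \<Longrightarrow> word_eval w \<in> signed_perms n"
  by (induction w) (auto intro!: signed_perms_comp gen_in_signed_perms id_in_signed_perms)

lemma signed_perms_SucI:
  assumes t: "\<tau> \<in> signed_perms n"
  shows "\<tau> \<in> signed_perms (Suc n)"
proof -
  have e: "sset (Suc n) = sset n \<union> {int n + 1, - int n - 1}" by (auto simp: mem_sset_iff)
  have "\<tau> ` sset n = sset n" using t unfolding signed_perms_def bij_betw_def by auto
  moreover have "\<tau> (int n + 1) = int n + 1" "\<tau> (- int n - 1) = - int n - 1"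
    by (rule signed_perm_fixed[OF t], simp add: mem_sset_iff)+
  ultimately have "\<tau> ` sset (Suc n) = sset (Suc n)" unfolding e image_Un by simp
  moreover have "inj_on \<tau> (sset (Suc n))"
    using signed_perm_inj[OF t] by (rule inj_on_subset) simp
  moreover have "\<forall>k. k \<notin> sset (Suc n) \<longrightarrow> \<tau> k = k"
    using signed_perm_fixed[OF t] e by auto
  ultimately show ?thesis
    using signed_perm_uminus[OF t] by (simp add: signed_perms_def bij_betw_def)
qed

lemma signed_perms_SucD:
  assumes s: "\<sigma> \<in> signed_perms (Suc n)" and fixed: "\<sigma> (int n + 1) = int n + 1"
  shows "\<sigma> \<in> signed_perms n"
proof -
  have fixed': "\<sigma> (- int n - 1) = - int n - 1"
    using signed_perm_uminus[OF s, of "int n + 1"] fixed by simp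
  have inj: "inj \<sigma>" by (rule signed_perm_inj[OF s])
  have into: "\<sigma> ` sset n \<subseteq> sset n"
  proof
    fix y assume "y \<in> \<sigma> ` sset n"
    then obtain k where k: "k \<in> sset n" "y = \<sigma> k" by blast
    have "y \<in> sset (Suc n)" using k signed_perm_in_sset[OF s, of k] by (simp add: mem_sset_iff)
    moreover have "k \<noteq> int n + 1" "k \<noteq> - int n - 1" using k(1) by (auto simp: mem_sset_iff)
    then have "y \<noteq> \<sigma> (int n + 1)" "y \<noteq> \<sigma> (- int n - 1)" using k(2) inj by (simp_all add: inj_eq)
    ultimately show "y \<in> sset n" using fixed fixed' by (auto simp: mem_sset_iff)
  qed
  have io: "inj_on \<sigma> (sset n)" using inj by (rule inj_on_subset) simp
  have "bij_betw \<sigma> (sset n) (sset n)"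
    unfolding bij_betw_def using io endo_inj_surj[OF finite_sset into io] by simp
  moreover have "\<forall>k. k \<notin> sset n \<longrightarrow> \<sigma> k = k"
  proof (intro allI impI)
    fix k assume "k \<notin> sset n"
    then have "k \<notin> sset (Suc n) \<or> k = int n + 1 \<or> k = - int n - 1" by (auto simp: mem_sset_iff)
    then show "\<sigma> k = k" using signed_perm_fixed[OF s] fixed fixed' by auto
  qed
  ultimately show ?thesis using signed_perm_uminus[OF s] by (simp add: signed_perms_def)
qed

lemma signed_perm_abs_bij:
  assumes t: "\<tau> \<in> signed_perms n"
  shows "bij_betw (\<lambda>i. \<bar>\<tau> i\<bar>) {1..int n} {1..int n}"
proof -
  have into: "(\<lambda>i. \<bar>\<tau> i\<bar>) ` {1..int n} \<subseteq> {1..int n}"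
  proof
    fix u assume "u \<in> (\<lambda>i. \<bar>\<tau> i\<bar>) ` {1..int n}"
    then obtain i where i: "i \<in> {1..int n}" "u = \<bar>\<tau> i\<bar>" by blast
    have "\<tau> i \<in> sset n" using i by (intro signed_perm_in_sset[OF t]) (simp add: mem_sset_iff)
    then show "u \<in> {1..int n}" using i by (simp add: mem_sset_iff)
  qed
  have inj: "inj_on (\<lambda>i. \<bar>\<tau> i\<bar>) {1..int n}"
  proof (rule inj_onI)
    fix i j assume ij: "i \<in> {1..int n}" "j \<in> {1..int n}" "\<bar>\<tau> i\<bar> = \<bar>\<tau> j\<bar>"
    then have "\<tau> i = \<tau> j \<or> \<tau> i = \<tau> (- j)"
      using signed_perm_uminus[OF t, of j] by (auto simp: abs_if split: if_splits)
    then have "i = j \<or> i = - j" using signed_perm_inj[OF t] by (auto dest: injD)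
    then show "i = j" using ij by auto
  qed
  show ?thesis unfolding bij_betw_def using inj endo_inj_surj[OF _ into inj] by simp
qed

section \<open>The length function of \<open>\<Sigma>(n)\<close>\<close>

text \<open>The statistics of the type B length formula (Bjoerner and Brenti, Combinatorics of Coxeter
  Groups, ch. 8); \<open>l1_l2_eq_counts\<close> below shows that they count the occurrences of \<open>\<pi>\<^sub>0\<close>, resp.
  of the \<open>\<pi>\<^sub>i\<close> with \<open>i \<ge> 1\<close>, in a reduced word.\<close>

definition neg_count :: "nat \<Rightarrow> (int \<Rightarrow> int) \<Rightarrow> nat" where
  "neg_count n \<sigma> = (\<Sum>j\<in>{1..int n}. if \<sigma> j < 0 then 1 else 0)"

definition inv_weight :: "int \<Rightarrow> int \<Rightarrow> nat" where
  "inv_weight a b = (if b < a then 1 else 0) + (if a + b < 0 then 1 else 0)"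

definition index_pairs :: "nat \<Rightarrow> (int \<times> int) set" where
  "index_pairs n = {(i, j). 1 \<le> i \<and> i < j \<and> j \<le> int n}"

definition inv_count :: "nat \<Rightarrow> (int \<Rightarrow> int) \<Rightarrow> nat" where
  "inv_count n \<sigma> = (\<Sum>(i, j)\<in>index_pairs n. inv_weight (\<sigma> i) (\<sigma> j))"

lemma finite_index_pairs [simp]: "finite (index_pairs n)"
  by (rule finite_subset[of _ "{1..int n} \<times> {1..int n}"]) (auto simp: index_pairs_def)

lemma neg_count_id [simp]: "neg_count n id = 0"
  by (simp add: neg_count_def)

lemma inv_count_id [simp]: "inv_count n id = 0"
  unfolding inv_count_def by (rule sum.neutral) (auto simp: index_pairs_def inv_weight_def)

lemma neg_count_comp_gen0:
  assumes "n \<ge> 1" "\<And>k. \<sigma> (- k) = - \<sigma> k"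
  shows "neg_count n (\<sigma> \<circ> gen 0) + (if \<sigma> 1 < 0 then 1 else 0)
       = neg_count n \<sigma> + (if \<sigma> 1 > 0 then 1 else 0)"
proof -
  have e: "{1..int n} = insert 1 {2..int n}" using assms(1) by auto
  have "(\<Sum>j\<in>{2..int n}. if (\<sigma> \<circ> gen 0) j < 0 then 1 else 0)
      = (\<Sum>j\<in>{2..int n}. if \<sigma> j < 0 then 1 else (0::nat))"
    by (rule sum.cong) (auto simp: gen_apply)
  moreover have "(\<sigma> \<circ> gen 0) 1 = - \<sigma> 1" using assms(2)[of 1] by (simp add: gen_apply)
  ultimately show ?thesis unfolding neg_count_def e by simp
qed

lemma neg_count_comp_gen:
  assumes "1 \<le> i" "i < n"
  shows "neg_count n (\<sigma> \<circ> gen i) = neg_count n \<sigma>"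
proof -
  have "bij_betw (gen i) {1..int n} {1..int n}"
    by (rule bij_betw_byWitness[where f' = "gen i"]) (use assms in \<open>auto simp: gen_apply\<close>)
  from sum.reindex_bij_betw[OF this, of "\<lambda>j. if \<sigma> j < 0 then 1 else (0::nat)"]
  show ?thesis unfolding neg_count_def by simp
qed

lemma inv_count_comp_gen0:
  assumes "\<And>k. \<sigma> (- k) = - \<sigma> k"
  shows "inv_count n (\<sigma> \<circ> gen 0) = inv_count n \<sigma>"
  unfolding inv_count_def
proof (rule sum.cong)
  fix p assume "p \<in> index_pairs n"
  then obtain a b where p: "p = (a, b)" "1 \<le> a" "a < b" by (auto simp: index_pairs_def)
  then have "gen 0 b = b" by (simp add: gen_apply)
  then show "(case p of (i, j) \<Rightarrow> inv_weight ((\<sigma> \<circ> gen 0) i) ((\<sigma> \<circ> gen 0) j))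
      = (case p of (i, j) \<Rightarrow> inv_weight (\<sigma> i) (\<sigma> j))"
    using p assms[of 1] by (cases "a = 1") (simp_all add: gen_apply inv_weight_def)
qed simp

lemma inv_count_comp_gen:
  assumes "1 \<le> i" "i < n"
  shows "inv_count n (\<sigma> \<circ> gen i) + (if \<sigma> (int i + 1) < \<sigma> (int i) then 1 else 0)
       = inv_count n \<sigma> + (if \<sigma> (int i) < \<sigma> (int i + 1) then 1 else 0)"
proof -
  define P where "P = index_pairs n - {(int i, int i + 1)}"
  have split: "index_pairs n = insert (int i, int i + 1) P"
    using assms by (auto simp: P_def index_pairs_def)
  have gen_pos: "\<And>k. 1 \<le> k \<Longrightarrow> gen i k = (if k = int i then int i + 1 else if k = int i + 1 then int i else k)"
    using assms by (auto simp: gen_apply)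
  let ?h = "\<lambda>(a, b). (gen i a, gen i b)"
  have into: "?h p \<in> P" if "p \<in> P" for p
  proof -
    obtain a b where p: "p = (a, b)" by (cases p)
    have "1 \<le> a" "a < b" "b \<le> int n" "(a, b) \<noteq> (int i, int i + 1)"
      using that unfolding p P_def index_pairs_def by auto
    then show ?thesis unfolding p using assms by (simp add: gen_pos P_def index_pairs_def) linarith
  qed
  have "bij_betw ?h P P"
    by (rule bij_betw_byWitness[where f' = ?h]) (use into in auto)
  from sum.reindex_bij_betw[OF this, of "\<lambda>(a, b). inv_weight (\<sigma> a) (\<sigma> b)"]
  have re: "(\<Sum>(a, b)\<in>P. inv_weight (\<sigma> (gen i a)) (\<sigma> (gen i b)))
      = (\<Sum>(a, b)\<in>P. inv_weight (\<sigma> a) (\<sigma> b))"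
    by (simp add: case_prod_unfold)
  have g: "gen i (int i) = int i + 1" "gen i (int i + 1) = int i"
    using assms by (auto simp: gen_apply)
  have fP: "finite P" and nP: "(int i, int i + 1) \<notin> P" by (simp_all add: P_def)
  have "inv_count n (\<sigma> \<circ> gen i)
      = inv_weight (\<sigma> (int i + 1)) (\<sigma> (int i)) + (\<Sum>(a, b)\<in>P. inv_weight (\<sigma> a) (\<sigma> b))"
    unfolding inv_count_def split sum.insert[OF fP nP] using re g by simp
  moreover have "inv_count n \<sigma>
      = inv_weight (\<sigma> (int i)) (\<sigma> (int i + 1)) + (\<Sum>(a, b)\<in>P. inv_weight (\<sigma> a) (\<sigma> b))"
    unfolding inv_count_def split sum.insert[OF fP nP] by simp
  ultimately show ?thesis by (simp add: inv_weight_def)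
qed

lemma length_eq_count_list_0_plus_nonzero:
  "length w = count_list w 0 + length (filter (\<lambda>i. i \<noteq> (0::nat)) w)"
  by (induction w) auto

lemma counts_le_word:
  assumes "set w \<subseteq> {0..<n}"
  shows "neg_count n (word_eval w) \<le> count_list w 0
    \<and> inv_count n (word_eval w) \<le> length (filter (\<lambda>i. i \<noteq> 0) w)"
  using assms
proof (induction w rule: rev_induct)
  case Nil
  then show ?case using neg_count_id[of n] inv_count_id[of n] by (simp add: id_def)
next
  case (snoc a w)
  define \<sigma> where "\<sigma> = word_eval w"
  have odd: "\<And>k. \<sigma> (- k) = - \<sigma> k" by (simp add: \<sigma>_def word_eval_uminus)
  have IH: "neg_count n \<sigma> \<le> count_list w 0" "inv_count n \<sigma> \<le> length (filter (\<lambda>i. i \<noteq> 0) w)"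
    using snoc by (auto simp: \<sigma>_def)
  have an: "a < n" and eq: "word_eval (w @ [a]) = \<sigma> \<circ> gen a"
    using snoc.prems by (auto simp: word_eval_snoc \<sigma>_def)
  show ?case
  proof (cases "a = 0")
    case True
    have "neg_count n (\<sigma> \<circ> gen 0) \<le> neg_count n \<sigma> + 1"
      using neg_count_comp_gen0[of n \<sigma>, OF _ odd] an True by (auto split: if_splits)
    moreover have "inv_count n (\<sigma> \<circ> gen 0) = inv_count n \<sigma>"
      by (rule inv_count_comp_gen0[of \<sigma>, OF odd])
    moreover have "count_list (w @ [a]) 0 = count_list w 0 + 1"
      "length (filter (\<lambda>i. i \<noteq> 0) (w @ [a])) = length (filter (\<lambda>i. i \<noteq> 0) w)"
      using True by simp_all
    moreover have eq0: "word_eval (w @ [a]) = \<sigma> \<circ> gen 0" using eq True by simp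
    ultimately show ?thesis using IH unfolding eq0 by linarith
  next
    case False
    have "inv_count n (\<sigma> \<circ> gen a) \<le> inv_count n \<sigma> + 1"
      using inv_count_comp_gen[of a n \<sigma>] an False by (auto split: if_splits)
    moreover have "neg_count n (\<sigma> \<circ> gen a) = neg_count n \<sigma>"
      using neg_count_comp_gen[of a n \<sigma>] an False by simp
    moreover have "count_list (w @ [a]) 0 = count_list w 0"
      "length (filter (\<lambda>i. i \<noteq> 0) (w @ [a])) = length (filter (\<lambda>i. i \<noteq> 0) w) + 1"
      using False by simp_all
    ultimately show ?thesis using IH unfolding eq by linarith
  qed
qed

lemma ascending_signed_perm_ge:
  assumes s: "\<sigma> \<in> signed_perms n"
    and asc: "\<And>i. 1 \<le> i \<Longrightarrow> i < n \<Longrightarrow> \<sigma> (int i) \<le> \<sigma> (int i + 1)"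
    and pos: "\<sigma> 1 \<ge> 0" and j: "1 \<le> j" "j \<le> n"
  shows "int j \<le> \<sigma> (int j)"
  using j
proof (induction j rule: nat_induct_at_least)
  case base
  then have "\<sigma> 1 \<in> sset n" by (intro signed_perm_in_sset[OF s]) (simp add: mem_sset_iff)
  then show ?case using pos by (auto simp: mem_sset_iff)
next
  case (Suc j)
  have "\<sigma> (int j) \<noteq> \<sigma> (int j + 1)" using signed_perm_inj[OF s] by (simp add: inj_eq)
  with asc[of j] Suc have "int j + 1 \<le> \<sigma> (int j + 1)" by linarith
  then show ?case by (simp add: add.commute)
qed

lemma ascending_signed_perm_le:
  assumes s: "\<sigma> \<in> signed_perms n"
    and asc: "\<And>i. 1 \<le> i \<Longrightarrow> i < n \<Longrightarrow> \<sigma> (int i) \<le> \<sigma> (int i + 1)"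
    and j: "1 \<le> j" "j \<le> n"
  shows "\<sigma> (int j) \<le> int j"
  using j(2,1)
proof (induction j rule: inc_induct)
  case base
  then have "\<sigma> (int n) \<in> sset n" by (intro signed_perm_in_sset[OF s]) (simp add: mem_sset_iff)
  then show ?case using abs_ge_self[of "\<sigma> (int n)"] unfolding mem_sset_iff by linarith
next
  case (step j)
  have "\<sigma> (int j) \<noteq> \<sigma> (int j + 1)" using signed_perm_inj[OF s] by (simp add: inj_eq)
  with asc[of j] step show ?case by (simp add: add.commute)
qed

lemma ascending_signed_perm_eq_id:
  assumes s: "\<sigma> \<in> signed_perms n"
    and asc: "\<And>i. 1 \<le> i \<Longrightarrow> i < n \<Longrightarrow> \<sigma> (int i) \<le> \<sigma> (int i + 1)"
    and pos: "n \<ge> 1 \<Longrightarrow> \<sigma> 1 \<ge> 0"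
  shows "\<sigma> = id"
proof
  fix k
  have pos_fixed: "\<sigma> k = k" if "1 \<le> k" "k \<le> int n" for k
  proof -
    have "1 \<le> nat k" "nat k \<le> n" "k = int (nat k)" using that by linarith+
    then show ?thesis
      using ascending_signed_perm_ge[OF s asc pos] ascending_signed_perm_le[OF s asc] by fastforce
  qed
  show "\<sigma> k = id k"
  proof (cases "k \<in> sset n")
    case True
    then show ?thesis
      using pos_fixed[of k] pos_fixed[of "- k"] signed_perm_uminus[OF s, of "- k"]
      by (cases "k > 0") (auto simp: mem_sset_iff)
  next
    case False
    then show ?thesis using signed_perm_fixed[OF s] by simp
  qed
qed

lemma word_with_counts_exists:
  assumes "\<sigma> \<in> signed_perms n"
  shows "\<exists>w. set w \<subseteq> {0..<n} \<and> word_eval w = \<sigma> \<and> count_list w 0 = neg_count n \<sigma>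
             \<and> length (filter (\<lambda>i. i \<noteq> 0) w) = inv_count n \<sigma>"
  using assms
proof (induction "neg_count n \<sigma> + inv_count n \<sigma>" arbitrary: \<sigma> rule: less_induct)
  case less
  note s = less.prems
  have odd: "\<And>k. \<sigma> (- k) = - \<sigma> k" using signed_perm_uminus[OF s] .
  \<comment> \<open>strip a right descent \<open>\<pi>\<^sub>a\<close>, recursing on the shorter \<open>\<sigma> \<pi>\<^sub>a\<close>\<close>
  have step: ?case if a: "a < n" and shorter: "neg_count n (\<sigma> \<circ> gen a) + inv_count n (\<sigma> \<circ> gen a) + 1
      = neg_count n \<sigma> + inv_count n \<sigma>"
    and counts: "count_list [a] 0 + neg_count n (\<sigma> \<circ> gen a) = neg_count n \<sigma>"
      "length (filter (\<lambda>i. i \<noteq> 0) [a]) + inv_count n (\<sigma> \<circ> gen a) = inv_count n \<sigma>" for a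
  proof -
    have "\<sigma> \<circ> gen a \<in> signed_perms n" using s gen_in_signed_perms[OF a] by (rule signed_perms_comp)
    then obtain w where w: "set w \<subseteq> {0..<n}" "word_eval w = \<sigma> \<circ> gen a"
        "count_list w 0 = neg_count n (\<sigma> \<circ> gen a)"
        "length (filter (\<lambda>i. i \<noteq> 0) w) = inv_count n (\<sigma> \<circ> gen a)"
      using less.hyps shorter by force
    have "word_eval (w @ [a]) = \<sigma>" using w(2) by (auto simp: word_eval_snoc)
    then show ?thesis using w a counts by (intro exI[of _ "w @ [a]"]) auto
  qed
  consider (descent) i where "1 \<le> i" "i < n" "\<sigma> (int i + 1) < \<sigma> (int i)"
    | (negative) "n \<ge> 1" "\<sigma> 1 < 0"
    | (ascending) "\<And>i. 1 \<le> i \<Longrightarrow> i < n \<Longrightarrow> \<sigma> (int i) \<le> \<sigma> (int i + 1)" "n \<ge> 1 \<Longrightarrow> \<sigma> 1 \<ge> 0"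
    by (meson not_less)
  then show ?case
  proof cases
    case descent
    then show ?thesis
      using inv_count_comp_gen[OF descent(1,2), of \<sigma>] neg_count_comp_gen[OF descent(1,2), of \<sigma>]
      by (intro step[of i]) auto
  next
    case negative
    then show ?thesis
      using neg_count_comp_gen0[of n \<sigma>, OF _ odd] inv_count_comp_gen0[of \<sigma> n, OF odd]
      by (intro step[of 0]) auto
  next
    case ascending
    then have "\<sigma> = id" by (intro ascending_signed_perm_eq_id[OF s])
    then show ?thesis by (intro exI[of _ "[]"]) simp
  qed
qed

lemma rword_reduced:
  assumes "\<sigma> \<in> signed_perms n"
  shows "reduced_word n (rword n \<sigma>) \<sigma>"
proof -
  let ?P = "\<lambda>w. set w \<subseteq> {0..<n} \<and> word_eval w = \<sigma>"
  obtain w0 where "?P w0" using word_with_counts_exists[OF assms] by blast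
  then obtain w where "?P w" "\<forall>w'. ?P w' \<longrightarrow> length w \<le> length w'"
    using ex_has_least_nat[of ?P w0 length] by blast
  then have "reduced_word n w \<sigma>" by (simp add: reduced_word_def)
  then show ?thesis unfolding rword_def by (rule someI)
qed

lemma l1_l2_eq_counts:
  assumes s: "\<sigma> \<in> signed_perms n"
  shows "l1 n \<sigma> = neg_count n \<sigma>" "l2 n \<sigma> = inv_count n \<sigma>"
proof -
  obtain w where w: "set w \<subseteq> {0..<n}" "word_eval w = \<sigma>" "count_list w 0 = neg_count n \<sigma>"
      "length (filter (\<lambda>i. i \<noteq> 0) w) = inv_count n \<sigma>"
    using word_with_counts_exists[OF s] by blast
  define r where "r = rword n \<sigma>"
  have r: "set r \<subseteq> {0..<n}" "word_eval r = \<sigma>" "length r \<le> length w"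
    using rword_reduced[OF s] w by (auto simp: reduced_word_def r_def)
  have "neg_count n \<sigma> \<le> count_list r 0" "inv_count n \<sigma> \<le> length (filter (\<lambda>i. i \<noteq> 0) r)"
    using counts_le_word[OF r(1)] r(2) by auto
  then have "count_list r 0 = neg_count n \<sigma>" "length (filter (\<lambda>i. i \<noteq> 0) r) = inv_count n \<sigma>"
    using r(3) w(3,4) length_eq_count_list_0_plus_nonzero[of r] length_eq_count_list_0_plus_nonzero[of w]
    by linarith+
  then show "l1 n \<sigma> = neg_count n \<sigma>" "l2 n \<sigma> = inv_count n \<sigma>" by (simp_all add: l1_def l2_def r_def)
qed

section \<open>The action of \<open>\<Sigma>(n)\<close> on elementary tensors\<close>

lemma act_word_Nil [simp]: "act_word bar [] xs = xs"
  by (simp add: act_word_def)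

lemma act_word_Cons [simp]: "act_word bar (a # w) xs = act_gen bar a (act_word bar w xs)"
  by (simp add: act_word_def)

lemma act_word_append: "act_word bar (v @ w) xs = act_word bar v (act_word bar w xs)"
  by (simp add: act_word_def)

lemma length_act_gen [simp]: "length (act_gen bar a xs) = length xs"
  by (auto simp: act_gen_def split: list.splits)

lemma length_act_word [simp]: "length (act_word bar w xs) = length xs"
  by (induction w) auto

lemma act_word_eq_Nil_iff [simp]: "act_word bar w xs = [] \<longleftrightarrow> xs = []"
  by (metis length_0_conv length_act_word)

lemma act_gen_nth:
  assumes "a < length ys" "j < length ys"
  shows "act_gen bar a ys ! j = (if a = 0 then (if j = 0 then bar (ys ! 0) else ys ! j)
    else ys ! Transposition.transpose (a - 1) a j)"
  using assms
  by (cases ys) (auto simp: act_gen_def nth_list_update nth_Cons transpose_def split: nat.splits)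

text \<open>The signed index \<open>k\<close> addresses the tensor factor at list position \<open>slot k\<close>; its sign
  records whether that factor carries a bar.\<close>

definition slot :: "int \<Rightarrow> nat" where
  "slot k = nat \<bar>k\<bar> - 1"

lemma slot_less: "k \<in> sset n \<Longrightarrow> slot k < n"
  by (auto simp: slot_def mem_sset_iff)

lemma slot_gen:
  assumes "a \<noteq> 0" "v \<noteq> 0"
  shows "slot (gen a v) = Transposition.transpose (a - 1) a (slot v)"
proof -
  have slot_simps: "slot (int a) = a - 1" "slot (- int a) = a - 1"
    "slot (int a + 1) = a" "slot (- int a - 1) = a"
    by (simp_all add: slot_def nat_add_distrib)
  consider "v = int a" | "v = - int a" | "v = int a + 1" | "v = - int a - 1"
    | "\<bar>v\<bar> \<noteq> int a" "\<bar>v\<bar> \<noteq> int a + 1" by linarith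
  then show ?thesis
  proof cases
    case 5
    then have "gen a v = v" using assms by (auto simp: gen_apply)
    moreover have "slot v \<noteq> a - 1" "slot v \<noteq> a" using 5 assms by (auto simp: slot_def)
    ultimately show ?thesis by (simp add: transpose_def)
  qed (use assms in \<open>simp_all add: gen_apply slot_simps transpose_def\<close>)
qed

lemma act_gen_nth_slot:
  assumes a: "a < length ys" and v: "v \<in> sset (length ys)"
  shows "act_gen bar a ys ! slot (gen a v)
    = (if (gen a v < 0) = (v < 0) then ys ! slot v else bar (ys ! slot v))"
proof -
  have gv: "gen a v \<in> sset (length ys)" by (rule signed_perm_in_sset[OF gen_in_signed_perms[OF a] v])
  then have len: "slot (gen a v) < length ys" "slot v < length ys"
    using v by (simp_all add: slot_less)
  show ?thesis
  proof (cases "a = 0")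
    case True
    show ?thesis
    proof (cases "\<bar>v\<bar> = 1")
      case True
      then have "gen a v = - v" "slot (gen a v) = 0" "slot v = 0" "v \<noteq> 0"
        using \<open>a = 0\<close> by (auto simp: gen_apply slot_def)
      then show ?thesis using \<open>a = 0\<close> a len by (auto simp: act_gen_nth)
    next
      case False
      then have "gen a v = v" "slot v \<noteq> 0"
        using \<open>a = 0\<close> v by (auto simp: gen_apply slot_def mem_sset_iff)
      then show ?thesis using \<open>a = 0\<close> a len by (simp add: act_gen_nth)
    qed
  next
    case False
    have "v \<noteq> 0" using v by (auto simp: mem_sset_iff)
    then have "(gen a v < 0) = (v < 0)" using False by (auto simp: gen_apply)
    then show ?thesis using False a len slot_gen[OF False \<open>v \<noteq> 0\<close>] by (simp add: act_gen_nth)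
  qed
qed

lemma act_word_nth_slot:
  assumes bar_invol: "\<And>h. bar (bar h) = h"
    and w: "set w \<subseteq> {0..<length xs}" and k: "k \<in> sset (length xs)"
  shows "act_word bar w xs ! slot (word_eval w k)
    = (if word_eval w k < 0 \<longleftrightarrow> k < 0 then xs ! slot k else bar (xs ! slot k))"
  using w
proof (induction w)
  case Nil
  then show ?case by simp
next
  case (Cons a w)
  have "word_eval w k \<in> sset (length xs)"
    using Cons.prems k by (intro signed_perm_in_sset[OF word_eval_in_signed_perms]) auto
  then show ?case
    using act_gen_nth_slot[of a "act_word bar w xs" "word_eval w k" bar] Cons bar_invol by auto
qed


lemma act_word_cong:
  assumes bar_invol: "\<And>h. bar (bar h) = h"
    and w1: "set w1 \<subseteq> {0..<length xs}" and w2: "set w2 \<subseteq> {0..<length xs}"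
    and eq: "word_eval w1 = word_eval w2"
  shows "act_word bar w1 xs = act_word bar w2 xs"
proof (rule nth_equalityI)
  fix p assume "p < length (act_word bar w1 xs)"
  then have "int p + 1 \<in> sset (length xs)" by (simp add: mem_sset_iff)
  moreover define k where "k = word_eval (rev w1) (int p + 1)"
  ultimately have k: "k \<in> sset (length xs)"
    using w1 by (auto intro!: signed_perm_in_sset[OF word_eval_in_signed_perms])
  have "word_eval w1 k = int p + 1" "slot (int p + 1) = p" by (simp_all add: k_def slot_def)
  then show "act_word bar w1 xs ! p = act_word bar w2 xs ! p"
    using act_word_nth_slot[OF bar_invol w1 k] act_word_nth_slot[OF bar_invol w2 k] eq by simp
qed simp

lemma sigma_act_word_eval:
  assumes bar_invol: "\<And>h. bar (bar h) = h"
    and w: "set w \<subseteq> {0..<length xs}"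
  shows "sigma_act bar (length xs) (word_eval w) xs = act_word bar w xs"
proof -
  have "reduced_word (length xs) (rword (length xs) (word_eval w)) (word_eval w)"
    by (rule rword_reduced[OF word_eval_in_signed_perms[OF w]])
  then show ?thesis
    unfolding sigma_act_def by (intro act_word_cong[OF bar_invol _ w]) (auto simp: reduced_word_def)
qed

lemma act_gen_snoc:
  "a < length ys \<Longrightarrow> act_gen bar a (ys @ [x]) = act_gen bar a ys @ [x]"
  by (cases ys) (auto simp: act_gen_def nth_append list_update_append split: nat.splits)

lemma act_word_snoc:
  "set w \<subseteq> {0..<length ys} \<Longrightarrow> act_word bar w (ys @ [x]) = act_word bar w ys @ [x]"
  by (induction w) (auto simp: act_gen_snoc)

lemma ip0_snoc:
  "length xs = length ys \<Longrightarrow> ip0 ip (xs @ [x]) (ys @ [y]) = ip0 ip xs ys * ip x y"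
  by (simp add: ip0_def nth_append)

lemma ip0_act_gen:
  assumes bar_sa: "\<And>h k. ip (bar h) k = ip h (bar k)"
    and a: "a < length xs" and l: "length ys = length xs"
  shows "ip0 ip (act_gen bar a xs) ys = ip0 ip xs (act_gen bar a ys)"
proof (cases "a = 0")
  case True
  obtain x0 xs' where xs: "xs = x0 # xs'" using a by (cases xs) auto
  obtain y0 ys' where ys: "ys = y0 # ys'" using a l by (cases ys) auto
  show ?thesis using True l unfolding xs ys
    by (simp add: ip0_def act_gen_def prod.lessThan_Suc_shift bar_sa del: prod.lessThan_Suc)
next
  case False
  define t where "t = Transposition.transpose (a - 1) a"
  have tt: "\<And>i. t (t i) = i" by (simp add: t_def)
  have bij: "bij_betw t {..<length xs} {..<length xs}"
    by (rule bij_betw_byWitness[where f' = t])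
      (use a False in \<open>auto simp: t_def Transposition.transpose_def\<close>)
  have nth: "\<And>zs i. length zs = length xs \<Longrightarrow> i < length xs \<Longrightarrow> act_gen bar a zs ! i = zs ! t i"
    using a False by (simp add: act_gen_nth t_def)
  have "(\<Prod>i<length xs. ip (act_gen bar a xs ! i) (ys ! i)) = (\<Prod>i<length xs. ip (xs ! t i) (ys ! i))"
    by (rule prod.cong) (auto simp: nth)
  also have "\<dots> = (\<Prod>i<length xs. ip (xs ! t (t i)) (ys ! t i))"
    using prod.reindex_bij_betw[OF bij, of "\<lambda>i. ip (xs ! t i) (ys ! i)"] by simp
  also have "\<dots> = (\<Prod>i<length xs. ip (xs ! i) (act_gen bar a ys ! i))"
    by (rule prod.cong) (auto simp: nth l tt)
  finally show ?thesis using l by (simp add: ip0_def)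
qed

lemma ip0_act_word:
  assumes bar_sa: "\<And>h k. ip (bar h) k = ip h (bar k)"
    and w: "set w \<subseteq> {0..<length xs}" and l: "length ys = length xs"
  shows "ip0 ip (act_word bar w xs) ys = ip0 ip xs (act_word bar (rev w) ys)"
  using w l
proof (induction w arbitrary: ys)
  case Nil
  then show ?case by simp
next
  case (Cons a w)
  have "ip0 ip (act_word bar (a # w) xs) ys = ip0 ip (act_word bar w xs) (act_gen bar a ys)"
    using Cons.prems by (simp add: ip0_act_gen[of ip bar, OF bar_sa])
  also have "\<dots> = ip0 ip xs (act_word bar (rev (a # w)) ys)"
    using Cons by (simp add: act_word_append)
  finally show ?case .
qed

section \<open>Factorisation through the cosets of \<open>\<Sigma>(n - 1)\<close>\<close>

text \<open>\<open>coset_rep n m\<close> is the minimal representative of the left coset of \<open>\<Sigma>(n - 1)\<close>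
  sending \<open>n\<close> to \<open>m\<close>: it is increasing on \<open>1, \<dots>, n - 1\<close> and shifts these indices
  to make room for \<open>\<bar>m\<bar>\<close>. The terms of \<open>R\<^sup>(\<^sup>n\<^sup>)\<close> are the operators \<open>coset_rep n m\<inverse>\<close>.\<close>

definition coset_rep :: "nat \<Rightarrow> int \<Rightarrow> int \<Rightarrow> int" where
  "coset_rep n m p = (if p = int n then m else if p = - int n then - m
     else if 0 < p \<and> p < int n then (if p < \<bar>m\<bar> then p else p + 1)
     else if - int n < p \<and> p < 0 then (if - p < \<bar>m\<bar> then p else p - 1)
     else p)"

definition coset_word :: "nat \<Rightarrow> int \<Rightarrow> nat list" where
  "coset_word n m = (if m > 0 then rev [nat m..<n] else rev [0..<n] @ [1..<nat \<bar>m\<bar>])"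

definition coset_len :: "nat \<Rightarrow> int \<Rightarrow> nat" where
  "coset_len n m = (if m > 0 then n - nat m else n - 1 + (nat \<bar>m\<bar> - 1))"

lemma set_coset_word: "m \<in> sset n \<Longrightarrow> set (coset_word n m) \<subseteq> {0..<n}"
  by (auto simp: coset_word_def mem_sset_iff)

lemma word_eval_upt:
  assumes "1 \<le> a" "a \<le> n"
  shows "word_eval [a..<n] p = (if p = int n then int a else if p = - int n then - int a
     else if int a \<le> p \<and> p < int n then p + 1 else if - int n < p \<and> p \<le> - int a then p - 1 else p)"
  using assms(2,1)
proof (induction a rule: inc_induct)
  case base
  then show ?case by simp
next
  case (step a)
  then have "word_eval [a..<n] p = gen a (word_eval [Suc a..<n] p)" by (simp add: upt_conv_Cons)
  then show ?case using step by (simp add: gen_apply)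
qed

lemma word_eval_rev_upt:
  "word_eval (rev [1..<k + 1]) p = (if p = 1 then int k + 1 else if p = -1 then - int k - 1
     else if 2 \<le> p \<and> p \<le> int k + 1 then p - 1 else if - int k - 1 \<le> p \<and> p \<le> -2 then p + 1 else p)"
proof (induction k arbitrary: p)
  case 0
  then show ?case by simp
next
  case (Suc k)
  then show ?case by (simp add: gen_apply)
qed

lemma word_eval_rev_coset_word:
  assumes "n \<ge> 1" "m \<in> sset n"
  shows "word_eval (rev (coset_word n m)) = coset_rep n m"
proof
  fix p
  show "word_eval (rev (coset_word n m)) p = coset_rep n m p"
  proof (cases "m > 0")
    case True
    then have "1 \<le> nat m" "nat m \<le> n" using assms by (auto simp: mem_sset_iff)
    then show ?thesis using True word_eval_upt[of "nat m" n p] by (simp add: coset_word_def coset_rep_def)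
  next
    case False
    define k where "k = nat \<bar>m\<bar> - 1"
    have k: "nat \<bar>m\<bar> = k + 1" "k < n" "m = - int k - 1"
      using assms False by (auto simp: mem_sset_iff k_def)
    have "[0..<n] = 0 # [1..<n]" using assms by (simp add: upt_conv_Cons)
    then have "word_eval (rev (coset_word n m)) p
        = word_eval (rev [1..<k + 1]) (gen 0 (word_eval [1..<n] p))"
      using False k by (simp add: coset_word_def word_eval_append)
    also have "\<dots> = coset_rep n m p"
      using word_eval_upt[of 1 n p] word_eval_rev_upt[of k] assms k by (simp add: gen_apply coset_rep_def)
    finally show ?thesis .
  qed
qed

lemma coset_rep_last [simp]: "coset_rep n m (int n) = m"
  by (simp add: coset_rep_def)

lemma coset_rep_in_signed_perms:
  assumes "n \<ge> 1" "m \<in> sset n"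
  shows "coset_rep n m \<in> signed_perms n"
  using word_eval_in_signed_perms[of "rev (coset_word n m)" n] set_coset_word[OF assms(2)]
    word_eval_rev_coset_word[OF assms] by simp

lemma coset_rep_uminus: "n \<ge> 1 \<Longrightarrow> coset_rep n m (- a) = - coset_rep n m a"
  unfolding coset_rep_def by auto

lemma coset_rep_mono:
  assumes "1 \<le> \<bar>m\<bar>" "\<bar>m\<bar> \<le> int n" "1 \<le> \<bar>a\<bar>" "\<bar>a\<bar> < int n" "1 \<le> \<bar>b\<bar>" "\<bar>b\<bar> < int n" "a < b"
  shows "coset_rep n m a < coset_rep n m b"
  using assms unfolding coset_rep_def by (auto split: if_splits)

lemma coset_rep_less_iff:
  assumes "1 \<le> \<bar>m\<bar>" "\<bar>m\<bar> \<le> int n" "1 \<le> \<bar>a\<bar>" "\<bar>a\<bar> < int n" "1 \<le> \<bar>b\<bar>" "\<bar>b\<bar> < int n"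
  shows "coset_rep n m b < coset_rep n m a \<longleftrightarrow> b < a"
  using coset_rep_mono[OF assms(1-4,5,6)] coset_rep_mono[OF assms(1,2,5,6,3,4)]
  by (metis less_imp_not_less linorder_neqE_linordered_idom)

lemma coset_rep_neg_iff:
  assumes "1 \<le> \<bar>v\<bar>" "\<bar>v\<bar> < int n"
  shows "coset_rep n m v < 0 \<longleftrightarrow> v < 0"
  using assms unfolding coset_rep_def by auto

lemma inv_weight_coset_rep:
  assumes "1 \<le> \<bar>m\<bar>" "\<bar>m\<bar> \<le> int n" "1 \<le> \<bar>a\<bar>" "\<bar>a\<bar> < int n" "1 \<le> \<bar>b\<bar>" "\<bar>b\<bar> < int n"
  shows "inv_weight (coset_rep n m a) (coset_rep n m b) = inv_weight a b"
proof -
  have "coset_rep n m b < coset_rep n m (- a) \<longleftrightarrow> b < - a"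
    by (rule coset_rep_less_iff) (use assms in auto)
  moreover have "n \<ge> 1" using assms by linarith
  ultimately have "coset_rep n m a + coset_rep n m b < 0 \<longleftrightarrow> a + b < 0"
    by (simp add: coset_rep_uminus) linarith
  then show ?thesis unfolding inv_weight_def coset_rep_less_iff[OF assms] by simp
qed

lemma inv_weight_coset_rep_last:
  assumes "1 \<le> \<bar>m\<bar>" "\<bar>m\<bar> \<le> int n" "1 \<le> \<bar>v\<bar>" "\<bar>v\<bar> < int n"
  shows "inv_weight (coset_rep n m v) m
    = (if m > 0 then (if m \<le> \<bar>v\<bar> then 1 else 0) else 1 + (if \<bar>v\<bar> < \<bar>m\<bar> then 1 else 0))"
  using assms unfolding coset_rep_def inv_weight_def by (auto split: if_splits)


lemma neg_count_coset_rep_comp: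
  assumes t: "\<tau> \<in> signed_perms n" and m: "m \<in> sset (Suc n)"
  shows "neg_count (Suc n) (coset_rep (Suc n) m \<circ> \<tau>) = neg_count n \<tau> + (if m < 0 then 1 else 0)"
proof -
  have e: "{1..int (Suc n)} = insert (int n + 1) {1..int n}" by auto
  have "\<tau> (1 + int n) = 1 + int n" by (rule signed_perm_fixed[OF t]) (simp add: mem_sset_iff)
  moreover have "coset_rep (Suc n) m (1 + int n) = m" by (simp add: coset_rep_def)
  moreover have "(\<Sum>j\<in>{1..int n}. if (coset_rep (Suc n) m \<circ> \<tau>) j < 0 then 1 else 0)
      = (\<Sum>j\<in>{1..int n}. if \<tau> j < 0 then 1 else (0::nat))"
  proof (rule sum.cong)
    fix j assume "j \<in> {1..int n}"
    then have "\<tau> j \<in> sset n" by (intro signed_perm_in_sset[OF t]) (simp add: mem_sset_iff)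
    then show "(if (coset_rep (Suc n) m \<circ> \<tau>) j < 0 then 1 else 0) = (if \<tau> j < 0 then 1 else (0::nat))"
      using coset_rep_neg_iff[of "\<tau> j" "Suc n" m] by (simp add: mem_sset_iff)
  qed simp
  ultimately show ?thesis unfolding neg_count_def e by (simp add: add.commute)
qed

lemma card_ge_in_interval:
  "1 \<le> m \<Longrightarrow> m \<le> N + 1 \<Longrightarrow> (\<Sum>u\<in>{1..N}. if m \<le> u then 1 else (0::nat)) = nat (N + 1 - m)"
proof -
  assume "1 \<le> m" "m \<le> N + 1"
  then have "{1..N} \<inter> {u. m \<le> u} = {m..N}" by auto
  then show ?thesis by (simp add: sum.If_cases)
qed

lemma card_lt_in_interval:
  "1 \<le> m \<Longrightarrow> (\<Sum>u\<in>{1..N}. if u < m then 1 else (0::nat)) = nat (min N (m - 1))"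
proof -
  assume "1 \<le> m"
  then have "{1..N} \<inter> {u. u < m} = {1..min N (m - 1)}" by auto
  then show ?thesis by (simp add: sum.If_cases)
qed

lemma sum_inv_weight_coset_rep_last:
  assumes t: "\<tau> \<in> signed_perms n" and m: "m \<in> sset (Suc n)"
  shows "(\<Sum>i\<in>{1..int n}. inv_weight (coset_rep (Suc n) m (\<tau> i)) m) = coset_len (Suc n) m"
proof -
  define g where "g u = (if m > 0 then (if m \<le> u then 1 else 0) else 1 + (if u < \<bar>m\<bar> then 1 else (0::nat)))" for u
  have ms: "1 \<le> \<bar>m\<bar>" "\<bar>m\<bar> \<le> int (Suc n)" using m by (auto simp: mem_sset_iff)
  have "(\<Sum>i\<in>{1..int n}. inv_weight (coset_rep (Suc n) m (\<tau> i)) m) = (\<Sum>i\<in>{1..int n}. g \<bar>\<tau> i\<bar>)"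
  proof (rule sum.cong)
    fix i assume "i \<in> {1..int n}"
    then have "\<tau> i \<in> sset n" by (intro signed_perm_in_sset[OF t]) (simp add: mem_sset_iff)
    then have "1 \<le> \<bar>\<tau> i\<bar>" "\<bar>\<tau> i\<bar> < int (Suc n)" by (auto simp: mem_sset_iff)
    then show "inv_weight (coset_rep (Suc n) m (\<tau> i)) m = g \<bar>\<tau> i\<bar>"
      using inv_weight_coset_rep_last[OF ms] by (simp add: g_def)
  qed simp
  also have "\<dots> = (\<Sum>u\<in>{1..int n}. g u)"
    using sum.reindex_bij_betw[OF signed_perm_abs_bij[OF t], of g] .
  also have "\<dots> = coset_len (Suc n) m"
  proof (cases "m > 0")
    case True
    then have "(\<Sum>u\<in>{1..int n}. g u) = (\<Sum>u\<in>{1..int n}. if m \<le> u then 1 else (0::nat))"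
      by (simp add: g_def)
    also have "\<dots> = nat (int n + 1 - m)" by (rule card_ge_in_interval) (use True ms in auto)
    finally show ?thesis using True by (simp add: coset_len_def)
  next
    case False
    then have "(\<Sum>u\<in>{1..int n}. g u) = (\<Sum>u\<in>{1..int n}. 1 + (if u < \<bar>m\<bar> then 1 else (0::nat)))"
      by (simp add: g_def)
    also have "\<dots> = n + (\<Sum>u\<in>{1..int n}. if u < \<bar>m\<bar> then 1 else (0::nat))"
      by (subst sum.distrib) simp
    also have "\<dots> = n + nat (\<bar>m\<bar> - 1)" using card_lt_in_interval[OF ms(1), of "int n"] ms by simp
    also have "nat (\<bar>m\<bar> - 1) = nat \<bar>m\<bar> - 1" using ms by (simp add: nat_diff_distrib)
    finally show ?thesis using False by (simp add: coset_len_def)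
  qed
  finally show ?thesis .
qed

lemma inv_count_coset_rep_comp:
  assumes t: "\<tau> \<in> signed_perms n" and m: "m \<in> sset (Suc n)"
  shows "inv_count (Suc n) (coset_rep (Suc n) m \<circ> \<tau>) = inv_count n \<tau> + coset_len (Suc n) m"
proof -
  let ?\<rho> = "coset_rep (Suc n) m"
  define A where "A = (\<lambda>i. (i, int n + 1)) ` {1..int n}"
  have split: "index_pairs (Suc n) = index_pairs n \<union> A" and disj: "index_pairs n \<inter> A = {}"
    unfolding A_def index_pairs_def by auto
  have in_range: "1 \<le> \<bar>\<tau> k\<bar> \<and> \<bar>\<tau> k\<bar> < int (Suc n)" if "1 \<le> k" "k \<le> int n" for k
    using signed_perm_in_sset[OF t, of k] that by (simp add: mem_sset_iff)
  have ms: "1 \<le> \<bar>m\<bar>" "\<bar>m\<bar> \<le> int (Suc n)" using m by (auto simp: mem_sset_iff)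
  have old: "(\<Sum>(i, j)\<in>index_pairs n. inv_weight ((?\<rho> \<circ> \<tau>) i) ((?\<rho> \<circ> \<tau>) j)) = inv_count n \<tau>"
    unfolding inv_count_def
  proof (rule sum.cong)
    fix p assume "p \<in> index_pairs n"
    then obtain i j where "p = (i, j)" "1 \<le> i" "i \<le> int n" "1 \<le> j" "j \<le> int n"
      by (auto simp: index_pairs_def)
    then show "(case p of (i, j) \<Rightarrow> inv_weight ((?\<rho> \<circ> \<tau>) i) ((?\<rho> \<circ> \<tau>) j))
        = (case p of (i, j) \<Rightarrow> inv_weight (\<tau> i) (\<tau> j))"
      using inv_weight_coset_rep[OF ms] in_range by simp
  qed simp
  have "\<tau> (1 + int n) = 1 + int n" by (rule signed_perm_fixed[OF t]) (simp add: mem_sset_iff)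
  moreover have "?\<rho> (1 + int n) = m" by (simp add: coset_rep_def)
  ultimately have new: "(\<Sum>(i, j)\<in>A. inv_weight ((?\<rho> \<circ> \<tau>) i) ((?\<rho> \<circ> \<tau>) j)) = coset_len (Suc n) m"
    unfolding A_def using sum_inv_weight_coset_rep_last[OF t m]
    by (subst sum.reindex) (auto intro: inj_onI simp: add.commute)
  have "inv_count (Suc n) (?\<rho> \<circ> \<tau>)
      = (\<Sum>(i, j)\<in>index_pairs n. inv_weight ((?\<rho> \<circ> \<tau>) i) ((?\<rho> \<circ> \<tau>) j))
        + (\<Sum>(i, j)\<in>A. inv_weight ((?\<rho> \<circ> \<tau>) i) ((?\<rho> \<circ> \<tau>) j))"
    unfolding inv_count_def split by (rule sum.union_disjoint) (use disj in \<open>auto simp: A_def\<close>)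
  then show ?thesis unfolding old new .
qed


lemma coset_rep_cancel:
  assumes "n \<ge> 1" "m \<in> sset n"
  shows "word_eval (coset_word n m) (coset_rep n m p) = p"
    and "coset_rep n m (word_eval (coset_word n m) p) = p"
  using word_eval_rev_coset_word[OF assms, symmetric]
  by (metis word_eval_cancel_rev, metis rev_rev_ident word_eval_cancel_rev)

lemma coset_rep_comp_in_signed_perms:
  assumes "\<tau> \<in> signed_perms n" "m \<in> sset (Suc n)"
  shows "coset_rep (Suc n) m \<circ> \<tau> \<in> signed_perms (Suc n)"
  using coset_rep_in_signed_perms[OF _ assms(2)] signed_perms_SucI[OF assms(1)]
  by (simp add: signed_perms_comp)

lemma signed_perms_coset_bij:
  "bij_betw (\<lambda>(m, \<tau>). coset_rep (Suc n) m \<circ> \<tau>) (sset (Suc n) \<times> signed_perms n) (signed_perms (Suc n))"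
proof -
  define N where "N = int (Suc n)"
  define f :: "int \<times> (int \<Rightarrow> int) \<Rightarrow> int \<Rightarrow> int" where "f = (\<lambda>(m, \<tau>). coset_rep (Suc n) m \<circ> \<tau>)"
  define g where "g \<sigma> = (\<sigma> N, word_eval (coset_word (Suc n) (\<sigma> N)) \<circ> \<sigma>)" for \<sigma> :: "int \<Rightarrow> int"
  have N: "N \<in> sset (Suc n)" by (simp add: N_def mem_sset_iff)
  have gf: "g (f (m, \<tau>)) = (m, \<tau>)" if m: "m \<in> sset (Suc n)" and t: "\<tau> \<in> signed_perms n" for m \<tau>
  proof -
    have "\<tau> N = N" using signed_perm_fixed[OF t] by (simp add: N_def mem_sset_iff)
    moreover have "coset_rep (Suc n) m N = m" unfolding N_def by (rule coset_rep_last)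
    ultimately show ?thesis using coset_rep_cancel(1)[OF _ m] by (simp add: f_def g_def fun_eq_iff)
  qed
  have fg: "f (g \<sigma>) = \<sigma>" if s: "\<sigma> \<in> signed_perms (Suc n)" for \<sigma>
    using coset_rep_cancel(2)[OF _ signed_perm_in_sset[OF s N]] by (simp add: f_def g_def fun_eq_iff)
  have f_into: "f (m, \<tau>) \<in> signed_perms (Suc n)" if "m \<in> sset (Suc n)" "\<tau> \<in> signed_perms n" for m \<tau>
    using coset_rep_comp_in_signed_perms[OF that(2,1)] by (simp add: f_def)
  have g_into: "g \<sigma> \<in> sset (Suc n) \<times> signed_perms n" if s: "\<sigma> \<in> signed_perms (Suc n)" for \<sigma>
  proof -
    have m: "\<sigma> N \<in> sset (Suc n)" by (rule signed_perm_in_sset[OF s N])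
    have "word_eval (coset_word (Suc n) (\<sigma> N)) \<circ> \<sigma> \<in> signed_perms (Suc n)"
      by (rule signed_perms_comp[OF word_eval_in_signed_perms[OF set_coset_word[OF m]] s])
    moreover have "(word_eval (coset_word (Suc n) (\<sigma> N)) \<circ> \<sigma>) (int n + 1) = int n + 1"
      using coset_rep_cancel(1)[OF _ m, of N] coset_rep_last[of "Suc n" "\<sigma> N"] by (simp add: N_def add.commute)
    ultimately show ?thesis using m signed_perms_SucD by (simp add: g_def)
  qed
  have "bij_betw f (sset (Suc n) \<times> signed_perms n) (signed_perms (Suc n))"
  proof (rule bij_betw_byWitness[where f' = g])
    show "g ` signed_perms (Suc n) \<subseteq> sset (Suc n) \<times> signed_perms n" using g_into by blast
  qed (use gf fg f_into in auto)
  then show ?thesis by (simp add: f_def)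
qed

lemma sum_signed_perms_Suc:
  "(\<Sum>\<sigma>\<in>signed_perms (Suc n). F \<sigma>) = (\<Sum>m\<in>sset (Suc n). \<Sum>\<tau>\<in>signed_perms n. F (coset_rep (Suc n) m \<circ> \<tau>))"
  using sum.reindex_bij_betw[OF signed_perms_coset_bij, of F]
  by (simp add: sum.cartesian_product case_prod_unfold)

definition coset_coeff :: "real \<Rightarrow> real \<Rightarrow> nat \<Rightarrow> int \<Rightarrow> complex" where
  "coset_coeff \<alpha> q n m = complex_of_real \<alpha> ^ (if m < 0 then 1 else 0) * complex_of_real q ^ coset_len n m"

lemma weight_coset_rep_comp:
  assumes t: "\<tau> \<in> signed_perms n" and m: "m \<in> sset (Suc n)"
  shows "complex_of_real \<alpha> ^ l1 (Suc n) (coset_rep (Suc n) m \<circ> \<tau>)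
       * complex_of_real q ^ l2 (Suc n) (coset_rep (Suc n) m \<circ> \<tau>)
    = coset_coeff \<alpha> q (Suc n) m * (complex_of_real \<alpha> ^ l1 n \<tau> * complex_of_real q ^ l2 n \<tau>)"
  using l1_l2_eq_counts[OF coset_rep_comp_in_signed_perms[OF t m]] l1_l2_eq_counts[OF t]
    neg_count_coset_rep_comp[OF t m] inv_count_coset_rep_comp[OF t m]
  by (simp add: coset_coeff_def power_add)

definition coset_list :: "nat \<Rightarrow> int list" where
  "coset_list n = [int n] @ map (\<lambda>k. int n - int k) [1..<n] @ [-1] @ map (\<lambda>k. - int k - 1) [1..<n]"

lemma distinct_coset_list: "distinct (coset_list n)"
  by (auto simp: coset_list_def distinct_map inj_on_def)

lemma set_coset_list: "n \<ge> 1 \<Longrightarrow> set (coset_list n) = sset n"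
proof
  assume "n \<ge> 1"
  then show "set (coset_list n) \<subseteq> sset n" by (auto simp: coset_list_def mem_sset_iff)
  show "sset n \<subseteq> set (coset_list n)"
  proof
    fix m assume m: "m \<in> sset n"
    consider "m = int n" | "0 < m" "m < int n" | "m = -1" | "m < -1"
      using m by (fastforce simp: mem_sset_iff)
    then show "m \<in> set (coset_list n)"
    proof cases
      case 2
      then have "m = int n - int (n - nat m)" "n - nat m \<in> {1..<n}" by auto
      then show ?thesis unfolding coset_list_def by (auto simp del: of_nat_diff)
    next
      case 4
      then have "m = - int (nat (- m) - 1) - 1" "nat (- m) - 1 \<in> {1..<n}" using m by (auto simp: mem_sset_iff)
      then show ?thesis unfolding coset_list_def by (auto simp del: of_nat_diff)
    qed (simp_all add: coset_list_def)
  qed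
qed

lemma Rop_eq_map_coset_list:
  "Rop bar \<alpha> q n xs = map (\<lambda>m. (coset_coeff \<alpha> q n m, act_word bar (coset_word n m) xs)) (coset_list n)"
proof -
  have up: "coset_coeff \<alpha> q n (int n - int k) = complex_of_real q ^ k"
    "coset_word n (int n - int k) = rev [n - k..<n]" if "k \<in> set [1..<n]" for k
    using that by (auto simp: coset_coeff_def coset_len_def coset_word_def nat_diff_distrib)
  have "coset_len n (- int k - 1) = (n - 1) + k" if "k \<in> set [1..<n]" for k
    using that by (simp add: coset_len_def nat_add_distrib)
  then have down: "coset_coeff \<alpha> q n (- int k - 1)
      = complex_of_real \<alpha> * complex_of_real q ^ (n - 1) * complex_of_real q ^ k"
    "coset_word n (- int k - 1) = rev [0..<n] @ [1..<k + 1]" if "k \<in> set [1..<n]" for k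
    using that by (simp_all only: coset_coeff_def power_add) (auto simp: coset_word_def nat_add_distrib)
  have ends: "coset_coeff \<alpha> q n (int n) = 1" "coset_word n (int n) = []"
    "coset_coeff \<alpha> q n (-1) = complex_of_real \<alpha> * complex_of_real q ^ (n - 1)"
    "coset_word n (-1) = rev [0..<n]"
    by (simp_all add: coset_coeff_def coset_len_def coset_word_def)
  show ?thesis
    unfolding Rop_def coset_list_def using up down ends by (simp cong: map_cong)
qed

lemma sum_list_Rop:
  assumes "n \<ge> 1"
  shows "(\<Sum>(c, zs)\<leftarrow>Rop bar \<alpha> q n xs. H c zs)
    = (\<Sum>m\<in>sset n. H (coset_coeff \<alpha> q n m) (act_word bar (coset_word n m) xs))"
  unfolding Rop_eq_map_coset_list set_coset_list[OF assms, symmetric]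
  by (simp add: sum_list_distinct_conv_sum_set[OF distinct_coset_list] comp_def)

section \<open>Sesquilinear calculus on the algebraic Fock space\<close>

lemma fop_Nil [simp]: "fop T [] = []"
  by (simp add: fop_def)

lemma fop_Cons [simp]: "fop T ((c, xs) # F) = map (\<lambda>(d, ys). (c * d, ys)) (T xs) @ fop T F"
  by (simp add: fop_def)

lemma fop_append: "fop T (F @ F') = fop T F @ fop T F'"
  by (simp add: fop_def)

lemma fop_scale: "fop T (map (\<lambda>(d, ys). (c * d, ys)) F) = map (\<lambda>(e, zs). (c * e, zs)) (fop T F)"
  by (induction F) (auto simp: split_def mult.assoc)

lemma fop_fop: "fop T (fop S F) = fop (\<lambda>xs. fop T (S xs)) F"
  by (induction F) (auto simp: fop_append fop_scale)

lemma fip_Nil_left [simp]: "fip E [] G = 0"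
  by (simp add: fip_def)

lemma fip_Cons_left: "fip E ((c, xs) # F) G = cnj c * (\<Sum>(d, ys)\<leftarrow>G. d * E xs ys) + fip E F G"
  by (simp add: fip_def sum_list_const_mult[symmetric] split_def mult.assoc)

lemma fip_append_left: "fip E (F @ F') G = fip E F G + fip E F' G"
  by (simp add: fip_def)

lemma fip_scale_left: "fip E (map (\<lambda>(d, ys). (c * d, ys)) F) G = cnj c * fip E F G"
  by (induction F) (auto simp: fip_Cons_left algebra_simps)

lemma fip_fop_left: "fip E (fop T F) G = (\<Sum>(c, xs)\<leftarrow>F. cnj c * fip E (T xs) G)"
  by (induction F) (auto simp: fip_append_left fip_scale_left)

lemma fip_expand_right: "fip E F G = (\<Sum>(d, ys)\<leftarrow>G. d * fip E F [(1, ys)])"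
proof -
  have "fip E F G = (\<Sum>(d, ys)\<leftarrow>G. \<Sum>(c, xs)\<leftarrow>F. cnj c * d * E xs ys)"
    unfolding fip_def by (induction F) (auto simp: split_def sum_list_addf)
  then show ?thesis
    by (simp add: fip_def split_def sum_list_const_mult[symmetric] algebra_simps)
qed

lemma fip_append_right: "fip E F (G @ G') = fip E F G + fip E F G'"
  by (simp add: fip_def split_def sum_list_addf)

lemma fip_fop_right: "fip E F (fop S G) = (\<Sum>(d, ys)\<leftarrow>G. d * fip E F (S ys))"
proof (induction G)
  case (Cons p G)
  obtain d ys where p: "p = (d, ys)" by (cases p)
  have "fip E F (map (\<lambda>(e, zs). (d * e, zs)) (S ys)) = d * fip E F (S ys)"
    by (subst (1 2) fip_expand_right) (simp add: split_def sum_list_const_mult[symmetric] comp_def mult.assoc)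
  then show ?case unfolding p fop_Cons fip_append_right Cons.IH by simp
qed (simp add: fip_def split_def)

lemma fip_expand_left: "fip E F G = (\<Sum>(c, xs)\<leftarrow>F. cnj c * fip E [(1, xs)] G)"
  by (induction F) (auto simp: fip_Cons_left)

lemma fip_fop_adjoint:
  assumes "\<And>c xs ys. (c, xs) \<in> set F \<Longrightarrow> fip E (T xs) [(1, ys)] = fip E [(1, xs)] (S ys)"
  shows "fip E (fop T F) G = fip E F (fop S G)"
proof -
  have "fip E (T xs) G = (\<Sum>(d, ys)\<leftarrow>G. d * fip E [(1, xs)] (S ys))" if "(c, xs) \<in> set F" for c xs
    using assms[OF that] by (subst fip_expand_right) simp
  then have "fip E (fop T F) G = (\<Sum>(c, xs)\<leftarrow>F. cnj c * (\<Sum>(d, ys)\<leftarrow>G. d * fip E [(1, xs)] (S ys)))"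
    unfolding fip_fop_left by (intro arg_cong[where f = sum_list] map_cong) auto
  also have "\<dots> = (\<Sum>(d, ys)\<leftarrow>G. d * (\<Sum>(c, xs)\<leftarrow>F. cnj c * fip E [(1, xs)] (S ys)))"
    by (induction F) (auto simp: split_def sum_list_addf sum_list_const_mult[symmetric] algebra_simps)
  also have "\<dots> = fip E F (fop S G)"
    by (simp add: fip_fop_right fip_expand_left[of E F])
  finally show ?thesis .
qed

lemma hip_cnj: "cnj (hip h k) = hip k h"
  by (simp add: hip_def complex_eq_iff inner_commute)

lemma ipaq_eq_0_if_length_ne:
  "length xs \<noteq> length ys \<Longrightarrow> ipaq ip bar \<alpha> q xs ys = 0"
  unfolding ipaq_def by (rule sum.neutral) (simp add: ip0_def sigma_act_def)

lemma ip0_coset_word_snoc: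
  assumes bar_invol: "\<And>h. bar (bar h) = h" and bar_sa: "\<And>h k. ip (bar h) k = ip h (bar k)"
    and t: "\<tau> \<in> signed_perms n" and m: "m \<in> sset (Suc n)"
    and lx: "length xs = Suc n" and ly: "length ys = n"
  defines "zs \<equiv> act_word bar (coset_word (Suc n) m) xs"
  shows "ip0 ip (butlast zs) (sigma_act bar n \<tau> ys) * ip (last zs) x
       = ip0 ip xs (sigma_act bar (Suc n) (coset_rep (Suc n) m \<circ> \<tau>) (ys @ [x]))"
proof -
  define r where "r = rword n \<tau>"
  have r: "set r \<subseteq> {0..<n}" "word_eval r = \<tau>"
    using rword_reduced[OF t] by (auto simp: reduced_word_def r_def)
  have w: "set (coset_word (Suc n) m) \<subseteq> {0..<Suc n}" by (rule set_coset_word[OF m])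
  have "zs \<noteq> []" using lx by (auto simp: zs_def)
  then have "zs = butlast zs @ [last zs]" by simp
  then have "ip0 ip (butlast zs) (sigma_act bar n \<tau> ys) * ip (last zs) x
      = ip0 ip zs (act_word bar r ys @ [x])"
    using lx ly by (metis ip0_snoc length_act_word length_butlast diff_Suc_1 zs_def sigma_act_def r_def)
  also have "\<dots> = ip0 ip xs (act_word bar (rev (coset_word (Suc n) m)) (act_word bar r (ys @ [x])))"
    unfolding zs_def using r(1) w lx ly by (simp add: act_word_snoc ip0_act_word[of ip bar, OF bar_sa])
  also have "\<dots> = ip0 ip xs (sigma_act bar (Suc n) (word_eval (rev (coset_word (Suc n) m) @ r)) (ys @ [x]))"
  proof -
    have "set (rev (coset_word (Suc n) m) @ r) \<subseteq> {0..<length (ys @ [x])}" using r(1) w ly by auto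
    from sigma_act_word_eval[OF bar_invol this] show ?thesis using ly by (simp add: act_word_append)
  qed
  also have "word_eval (rev (coset_word (Suc n) m) @ r) = coset_rep (Suc n) m \<circ> \<tau>"
    using word_eval_rev_coset_word[OF _ m] r(2) by (simp add: word_eval_append)
  finally show ?thesis .
qed

text \<open>The factorisation \<open>P\<^sup>(\<^sup>n\<^sup>+\<^sup>1\<^sup>) = (\<Sum>\<^sub>m coset_coeff m \<cdot> coset_rep m) (P\<^sup>(\<^sup>n\<^sup>) \<otimes> 1)\<close>, read
  through the free inner product.\<close>

lemma ipaq_snoc:
  assumes bar_invol: "\<And>h. bar (bar h) = h" and bar_sa: "\<And>h k. ip (bar h) k = ip h (bar k)"
    and lx: "length xs = Suc n" and ly: "length ys = n"
  shows "ipaq ip bar \<alpha> q xs (ys @ [x])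
    = (\<Sum>m\<in>sset (Suc n). coset_coeff \<alpha> q (Suc n) m * ip (last (act_word bar (coset_word (Suc n) m) xs)) x
        * ipaq ip bar \<alpha> q (butlast (act_word bar (coset_word (Suc n) m) xs)) ys)"
proof -
  let ?w = "\<lambda>N \<sigma>. complex_of_real \<alpha> ^ l1 N \<sigma> * complex_of_real q ^ l2 N \<sigma>"
  have "ipaq ip bar \<alpha> q xs (ys @ [x]) = (\<Sum>m\<in>sset (Suc n). \<Sum>\<tau>\<in>signed_perms n.
      ?w (Suc n) (coset_rep (Suc n) m \<circ> \<tau>)
      * ip0 ip xs (sigma_act bar (Suc n) (coset_rep (Suc n) m \<circ> \<tau>) (ys @ [x])))"
    unfolding ipaq_def using ly by (simp add: sum_signed_perms_Suc)
  also have "\<dots> = (\<Sum>m\<in>sset (Suc n). \<Sum>\<tau>\<in>signed_perms n. coset_coeff \<alpha> q (Suc n) m * ?w n \<tau>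
      * (ip0 ip (butlast (act_word bar (coset_word (Suc n) m) xs)) (sigma_act bar n \<tau> ys)
         * ip (last (act_word bar (coset_word (Suc n) m) xs)) x))"
    using weight_coset_rep_comp ip0_coset_word_snoc[of bar ip, OF bar_invol bar_sa _ _ lx ly] by simp
  also have "\<dots> = (\<Sum>m\<in>sset (Suc n). coset_coeff \<alpha> q (Suc n) m * ip (last (act_word bar (coset_word (Suc n) m) xs)) x
        * ipaq ip bar \<alpha> q (butlast (act_word bar (coset_word (Suc n) m) xs)) ys)"
    unfolding ipaq_def using ly by (simp add: sum_distrib_left algebra_simps)
  finally show ?thesis .
qed

lemma fip_rann:
  assumes "\<forall>(c, zs)\<in>set F. zs \<noteq> []"
  shows "fip E (fop (rann ip x) F) [(1, ys)]
    = (\<Sum>(c, zs)\<leftarrow>F. cnj c * cnj (ip x (last zs)) * E (butlast zs) ys)"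
  using assms by (induction F) (auto simp: fip_def rann_def)

lemma fip_rann_Rop:
  assumes bar_invol: "\<And>h. bar (bar h) = h" and bar_sa: "\<And>h k. ip (bar h) k = ip h (bar k)"
    and ip_cnj: "\<And>h k. cnj (ip h k) = ip k h" and lx: "length xs = Suc n"
  shows "fip (ipaq ip bar \<alpha> q) (fop (rann ip x) (Rop bar \<alpha> q (Suc n) xs)) [(1, ys)]
    = ipaq ip bar \<alpha> q xs (ys @ [x])"
proof -
  have "\<forall>(c, zs)\<in>set (Rop bar \<alpha> q (Suc n) xs). zs \<noteq> []"
    using lx by (auto simp: Rop_eq_map_coset_list)
  then have "fip (ipaq ip bar \<alpha> q) (fop (rann ip x) (Rop bar \<alpha> q (Suc n) xs)) [(1, ys)]
    = (\<Sum>(c, zs)\<leftarrow>Rop bar \<alpha> q (Suc n) xs. cnj c * cnj (ip x (last zs)) * ipaq ip bar \<alpha> q (butlast zs) ys)"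
    by (rule fip_rann)
  also have "\<dots> = (\<Sum>m\<in>sset (Suc n). coset_coeff \<alpha> q (Suc n) m
      * ip (last (act_word bar (coset_word (Suc n) m) xs)) x
      * ipaq ip bar \<alpha> q (butlast (act_word bar (coset_word (Suc n) m) xs)) ys)"
    by (simp add: sum_list_Rop ip_cnj coset_coeff_def)
  also have "\<dots> = ipaq ip bar \<alpha> q xs (ys @ [x])"
  proof (cases "length ys = n")
    case True
    then show ?thesis using ipaq_snoc[of bar ip, OF bar_invol bar_sa lx] by simp
  next
    case False
    then show ?thesis using lx by (simp add: ipaq_eq_0_if_length_ne)
  qed
  finally show ?thesis .
qed

theorem mainTheorem2:
  fixes bar :: "('r::{real_inner, complete_space} \<times> 'r) \<Rightarrow> 'r \<times> 'r"
    and \<alpha> q :: real and x :: "'r \<times> 'r" and n :: nat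
    and f g :: "('r \<times> 'r) fock"
  assumes separable: "\<exists>D::'r set. countable D \<and> closure D = UNIV"
    and bar_add: "\<And>h k. bar (h + k) = bar h + bar k"
    and bar_scale: "\<And>z h. bar (cscale z h) = cscale z (bar h)"
    and bar_invol: "\<And>h. bar (bar h) = h"
    and bar_sa: "\<And>h k. hip (bar h) k = hip h (bar k)"
    and "-1 < \<alpha>" "\<alpha> < 1" "-1 < q" "q < 1"
    and "n \<ge> 1"
    and f_deg: "\<forall>(c, xs)\<in>set f. length xs = n"
  shows "fip (ipaq hip bar \<alpha> q) (fop (rann hip x) (fop (Rop bar \<alpha> q n) f)) g
       = fip (ipaq hip bar \<alpha> q) f (fop (rcre x) g)"
proof -
  let ?E = "ipaq hip bar \<alpha> q"
  obtain n0 where n: "n = Suc n0" using \<open>n \<ge> 1\<close> by (cases n) auto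
  have elementary: "fip ?E (fop (rann hip x) (Rop bar \<alpha> q n xs)) [(1, ys)] = fip ?E [(1, xs)] (rcre x ys)"
    if "length xs = n" for xs ys
    using fip_rann_Rop[of bar hip, OF bar_invol bar_sa hip_cnj, of xs n0 \<alpha> q x ys] that n
    by (simp add: fip_def rcre_def)
  have "fop (rann hip x) (fop (Rop bar \<alpha> q n) f) = fop (\<lambda>xs. fop (rann hip x) (Rop bar \<alpha> q n xs)) f"
    by (rule fop_fop)
  also have "fip ?E \<dots> g = fip ?E f (fop (rcre x) g)"
    by (rule fip_fop_adjoint) (use elementary f_deg in fastforce)
  finally show ?thesis .
qed

end
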